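(* Let $p,q$ be integers with $1+|p|<|q|$ and $\gcd(p,q)=1$. Then for every nonzero integer $m$, neither $\psi_{p,q}^{-1}(\langle m\xi\rangle)$ nor $\psi_{p,q}^{-1}(\langle m\eta\rangle)$ is a regular language. More generally, for any $\zeta\in\mathbb{Z}^2$ and integer $m>1$, if $\psi_{p,q}^{-1}(\langle\zeta\rangle)$ is not regular then $\psi_{p,q}^{-1}(\langle m\zeta\rangle)$ is not regular.
   Context: Let $p,q$ be integers with $1+|p|<|q|$ and $t(x)=x^2+px-q$. For $f,g\in\mathbb{Z}[x]$ write $f\sim g$ if $t$ divides $f-g$; identify $\mathbb{Z}^2$ with the additive group of $\mathbb{Z}[x]/\langle t\rangle$ via $(h_1,h_2)\mapsto[h_1x+h_2]_\sim$, and put $\eta=[x]_\sim$, $\xi=[1]_\sim$. Let $\Sigma_q=\{-(|q|-1),\dots,|q|-1\}$ with the order $-(|q|-1)<\dots<|q|-1$; a string $a_0a_1\dots a_n\in\Sigma_q^*$ represents the polynomial $a_nx^n+\dots+a_1x+a_0$, and two strings are equivalent if their polynomials are $\sim$-equivalent. $\mathrm{Dom}_{p,q}$ is the set of $w\in\Sigma_q^*$ such that no string strictly smaller than $w$ in the length-lexicographic order on $\Sigma_q^*$ is equivalent to $w$, and $\psi_{p,q}:\mathrm{Dom}_{p,q}\to\mathbb{Z}^2$ sends $w$ to the $\sim$-class of the polynomial it represents. *)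

theory Defs
  imports "HOL-Computational_Algebra.Polynomial"
begin

definition tpoly :: "int \<Rightarrow> int \<Rightarrow> int poly" where
  "tpoly p q = [:-q, p, 1:]"

definition peq :: "int \<Rightarrow> int \<Rightarrow> int poly \<Rightarrow> int poly \<Rightarrow> bool" where
  "peq p q f g \<longleftrightarrow> tpoly p q dvd (f - g)"

definition Sigma :: "int \<Rightarrow> int set" where
  "Sigma q = {-(\<bar>q\<bar> - 1) .. \<bar>q\<bar> - 1}"

(* the string a0 a1 ... an represents a_n x^n + ... + a_1 x + a_0 *)
definition strpoly :: "int list \<Rightarrow> int poly" where
  "strpoly w = Poly w"

definition str_equiv :: "int \<Rightarrow> int \<Rightarrow> int list \<Rightarrow> int list \<Rightarrow> bool" where
  "str_equiv p q v w \<longleftrightarrow> peq p q (strpoly v) (strpoly w)"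

definition llex_less :: "int list \<Rightarrow> int list \<Rightarrow> bool" where
  "llex_less v w \<longleftrightarrow> length v < length w \<or>
     (length v = length w \<and> (v, w) \<in> lexord {(a, b). a < b})"

definition Dom :: "int \<Rightarrow> int \<Rightarrow> int list set" where
  "Dom p q = {w \<in> lists (Sigma q).
      \<not> (\<exists>v \<in> lists (Sigma q). llex_less v w \<and> str_equiv p q v w)}"

(* identification of Z^2 with Z[x]/<t>: (h1,h2) <-> [h1 x + h2] *)
definition psi :: "int \<Rightarrow> int \<Rightarrow> int list \<Rightarrow> int \<times> int" where
  "psi p q w = (THE h. peq p q (strpoly w) [:snd h, fst h:])"

definition eta :: "int \<times> int" where "eta = (1, 0)"
definition xi :: "int \<times> int" where "xi = (0, 1)"

definition zscale :: "int \<Rightarrow> int \<times> int \<Rightarrow> int \<times> int" where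
  "zscale m z = (m * fst z, m * snd z)"

definition cyc :: "int \<times> int \<Rightarrow> (int \<times> int) set" where
  "cyc z = {zscale k z | k. True}"

definition psi_preimage :: "int \<Rightarrow> int \<Rightarrow> (int \<times> int) set \<Rightarrow> int list set" where
  "psi_preimage p q S = {w \<in> Dom p q. psi p q w \<in> S}"

definition regular_lang :: "'a set \<Rightarrow> 'a list set \<Rightarrow> bool" where
  "regular_lang A L \<longleftrightarrow> L \<subseteq> lists A \<and>
     (\<exists>(Q :: nat set) (\<delta> :: nat \<Rightarrow> 'a \<Rightarrow> nat) s F.
        finite Q \<and> s \<in> Q \<and> F \<subseteq> Q \<and> (\<forall>x\<in>Q. \<forall>a\<in>A. \<delta> x a \<in> Q) \<and>
        L = {w \<in> lists A. foldl \<delta> s w \<in> F})"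

end

(*
  Identify \<zeta> = \<zeta>1 \<eta> + \<zeta>2 \<xi> with the class of \<zeta>1 x + \<zeta>2 and let
  N(\<zeta>) = \<zeta>2^2 - p \<zeta>1 \<zeta>2 - q \<zeta>1^2 be its norm. The preimage of \<langle>\<zeta>\<rangle> is regular
  exactly when N(\<zeta>) = 0; since N(m \<zeta>) = m^2 N(\<zeta>), N(\<xi>) = 1 and N(\<eta>) = -q, the
  theorem follows.

  If N(\<zeta>) \<noteq> 0, an automaton cannot separate 0^n w from 0^m w for some n < m. Take w in normal
  form for (x + p)^n \<zeta>; then 0^n w represents x^n (x + p)^n \<zeta> \<equiv> q^n \<zeta>, and 0^m w
  represents x^(m-n) q^n \<zeta>. As gcd(p, q) = 1, every power of x is congruent to a x + b with a \<noteq> 0,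
  so this class lies in \<langle>\<zeta>\<rangle> only if \<zeta> is an eigenvector of x, i.e. N(\<zeta>) = 0.

  If N(\<zeta>) = 0, then \<zeta> spans the eigenline of an integer root s of t, and a string in normal form
  lies in the preimage iff its polynomial vanishes at s and its value at the other root is divisible
  by a fixed integer. Both conditions are checked by automata with bounded carries; so is being in
  normal form, which amounts to the nonexistence of an equivalent, smaller string of the same length.
*)

theory Submission
  imports Defs "HOL-Library.List_Lenlexorder"
begin

section \<open>Arithmetic modulo t\<close>

lemma peq_refl [simp]: "peq p q f f"
  by (simp add: peq_def)

lemma peq_sym: "peq p q f g \<Longrightarrow> peq p q g f"
  unfolding peq_def by (metis dvd_minus_iff minus_diff_eq)

lemma peq_trans [trans]: "peq p q f g \<Longrightarrow> peq p q g h \<Longrightarrow> peq p q f h"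
  unfolding peq_def by (drule (1) dvd_add) simp

lemma peq_add: "peq p q f g \<Longrightarrow> peq p q f' g' \<Longrightarrow> peq p q (f + f') (g + g')"
  unfolding peq_def by (drule (1) dvd_add) (simp add: algebra_simps)

lemma peq_mult: "peq p q f g \<Longrightarrow> peq p q f' g' \<Longrightarrow> peq p q (f * f') (g * g')"
proof -
  assume "peq p q f g" "peq p q f' g'"
  then have "tpoly p q dvd (f - g) * f' + g * (f' - g')"
    unfolding peq_def by (intro dvd_add dvd_mult dvd_mult2)
  then show ?thesis
    by (simp add: peq_def algebra_simps)
qed

lemma peq_power: "peq p q f g \<Longrightarrow> peq p q (f ^ n) (g ^ n)"
  by (induction n) (auto intro: peq_mult)

lemma peq_add_tpoly_mult: "peq p q (f + tpoly p q * h) f"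
  by (simp add: peq_def)

lemma tpoly_dvd_coeff_0: "tpoly p q dvd f \<Longrightarrow> q dvd coeff f 0"
  by (auto simp: tpoly_def coeff_mult_0)

lemma tpoly_dvd_linear_iff: "tpoly p q dvd [:a, b:] \<longleftrightarrow> a = 0 \<and> b = 0"
proof
  assume "tpoly p q dvd [:a, b:]"
  moreover have "degree [:a, b:] < degree (tpoly p q)"
    by (simp add: tpoly_def)
  ultimately have "[:a, b:] = 0"
    using dvd_imp_degree_le[of "tpoly p q"] by (fastforce simp: tpoly_def)
  then show "a = 0 \<and> b = 0" by simp
qed simp

lemma peq_linear_iff: "peq p q [:a, b:] [:c, d:] \<longleftrightarrow> a = c \<and> b = d"
  using tpoly_dvd_linear_iff[of p q "a - c" "b - d"] by (simp add: peq_def)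

text \<open>Multiplication by x can be cancelled modulo t because t(0) = -q is nonzero.\<close>

lemma tpoly_dvd_pCons_0_iff:
  assumes "q \<noteq> 0"
  shows "tpoly p q dvd pCons 0 f \<longleftrightarrow> tpoly p q dvd f"
proof
  assume "tpoly p q dvd pCons 0 f"
  then obtain h where h: "pCons 0 f = tpoly p q * h" by (elim dvdE)
  obtain c h' where c: "h = pCons c h'" by (cases h)
  have "c = 0"
    using arg_cong[OF h, of "\<lambda>f. coeff f 0"] assms by (simp add: c tpoly_def coeff_mult_0)
  then have "pCons 0 f = pCons 0 (tpoly p q * h')"
    using h c by (simp add: algebra_simps)
  then show "tpoly p q dvd f" by simp
next
  assume "tpoly p q dvd f"
  then obtain h where "f = tpoly p q * h" by (elim dvdE)
  then have "pCons 0 f = tpoly p q * pCons 0 h" by simp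
  then show "tpoly p q dvd pCons 0 f" by (rule dvdI)
qed

lemma peq_x_mult_linear: "peq p q ([:0, 1:] * [:b, a:]) [:a * q, b - a * p:]"
proof -
  have "[:0, 1:] * [:b, a:] = [:a * q, b - a * p:] + tpoly p q * [:a:]"
    by (simp add: tpoly_def algebra_simps)
  then show ?thesis
    by (simp only: peq_add_tpoly_mult)
qed

lemma peq_pCons_linear:
  assumes "peq p q f [:b, a:]"
  shows "peq p q (pCons c f) [:c + a * q, b - a * p:]"
proof -
  have "pCons c f = [:c:] + [:0, 1:] * f"
    by simp
  also have "peq p q \<dots> ([:c:] + [:a * q, b - a * p:])"
    using peq_refl peq_trans[OF peq_mult[OF peq_refl assms] peq_x_mult_linear] by (rule peq_add)
  also have "[:c:] + [:a * q, b - a * p:] = [:c + a * q, b - a * p:]"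
    by simp
  finally show ?thesis .
qed

lemma peq_linear_exists: "\<exists>a b. peq p q f [:b, a:]"
proof (induction f)
  case (pCons c f)
  then show ?case
    using peq_pCons_linear by blast
qed (metis pCons_0_0 peq_refl)

lemma psi_eqI: "peq p q (Poly w) [:b, a:] \<Longrightarrow> psi p q w = (a, b)"
  unfolding psi_def strpoly_def
proof (rule the_equality)
  fix h assume "peq p q (Poly w) [:b, a:]" "peq p q (Poly w) [:snd h, fst h:]"
  then show "h = (a, b)"
    by (metis peq_linear_iff peq_sym peq_trans prod.collapse)
qed simp

lemma psi_peq: "peq p q (Poly w) [:snd (psi p q w), fst (psi p q w):]"
  using peq_linear_exists[of p q "Poly w"] psi_eqI by fastforce

text \<open>The norm of the class fst z \<cdot> x + snd z, i.e. (snd z + fst z \<alpha>)(snd z + fst z \<beta>) for the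
  roots \<alpha>, \<beta> of t. It vanishes exactly when z spans a line invariant under multiplication by x.\<close>

definition class_norm :: "int \<Rightarrow> int \<Rightarrow> int \<times> int \<Rightarrow> int" where
  "class_norm p q z = (snd z)\<^sup>2 - p * fst z * snd z - q * (fst z)\<^sup>2"

lemma class_norm_zscale: "class_norm p q (zscale m z) = m\<^sup>2 * class_norm p q z"
  by (simp add: class_norm_def zscale_def power2_eq_square algebra_simps)

lemma class_norm_eq_0_if_eigenvector:
  assumes "peq p q (smult c ([:b, a:] * [:z2, z1:])) [:k * z2, k * z1:]" and "a \<noteq> 0" and "c \<noteq> 0"
  shows "class_norm p q (z1, z2) = 0"
proof -
  have "smult c ([:b, a:] * [:z2, z1:]) =
      [:c * (b * z2 + a * z1 * q), c * (a * z2 + b * z1 - a * z1 * p):] + tpoly p q * [:c * a * z1:]"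
    by (simp add: tpoly_def algebra_simps)
  then have "peq p q [:c * (b * z2 + a * z1 * q), c * (a * z2 + b * z1 - a * z1 * p):]
      (smult c ([:b, a:] * [:z2, z1:]))"
    by (metis peq_add_tpoly_mult peq_sym)
  then have "peq p q [:c * (b * z2 + a * z1 * q), c * (a * z2 + b * z1 - a * z1 * p):]
      [:k * z2, k * z1:]"
    using assms(1) by (rule peq_trans)
  then have e1: "c * (b * z2 + a * z1 * q) = k * z2" and e2: "c * (a * z2 + b * z1 - a * z1 * p) = k * z1"
    by (simp_all add: peq_linear_iff)
  have "c * a * class_norm p q (z1, z2) = z2 * (c * (a * z2 + b * z1 - a * z1 * p)) - z1 * (c * (b * z2 + a * z1 * q))"
    by (simp add: class_norm_def power2_eq_square algebra_simps)
  also have "\<dots> = 0"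
    unfolding e1 e2 by simp
  finally show ?thesis
    using assms(2,3) by simp
qed

lemma x_power_peq_linear:
  "\<exists>a b. peq p q ([:0, 1:] ^ Suc n) [:b, a:] \<and> q dvd b \<and> a mod q = (- p) ^ n mod q"
proof (induction n)
  case 0
  show ?case by (rule exI[of _ 1], rule exI[of _ 0]) simp
next
  case (Suc n)
  then obtain a b k where ab: "peq p q ([:0, 1:] ^ Suc n) [:b, a:]" "b = q * k"
    "a mod q = (- p) ^ n mod q" by blast
  have "peq p q ([:0, 1:] ^ Suc (Suc n)) ([:0, 1:] * [:b, a:])"
    unfolding power_Suc[of _ "Suc n"] using ab(1) by (rule peq_mult[OF peq_refl])
  then have "peq p q ([:0, 1:] ^ Suc (Suc n)) [:a * q, b - a * p:]"
    using peq_x_mult_linear by (rule peq_trans)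
  moreover have "(b - a * p) mod q = (- p) ^ Suc n mod q"
  proof -
    have "(b - a * p) mod q = (- (a * p) + k * q) mod q"
      using ab(2) by (simp add: algebra_simps)
    also have "\<dots> = (- (a mod q * p)) mod q"
      unfolding mod_mult_self1 by (metis mod_minus_eq mod_mult_left_eq)
    also have "\<dots> = (- ((- p) ^ n * p)) mod q"
      unfolding ab(3) by (metis mod_minus_eq mod_mult_left_eq)
    finally show ?thesis by (simp add: mult.commute)
  qed
  ultimately show ?case
    by (intro exI[of _ "b - a * p"] exI[of _ "a * q"]) simp
qed

lemma x_power_peq_linear_nonzero:
  assumes "gcd p q = 1" and "\<bar>q\<bar> > 1"
  obtains a b where "peq p q ([:0, 1:] ^ Suc n) [:b, a:]" and "a \<noteq> 0"
proof -
  obtain a b where ab: "peq p q ([:0, 1:] ^ Suc n) [:b, a:]" "a mod q = (- p) ^ n mod q"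
    using x_power_peq_linear by blast
  have "a \<noteq> 0"
  proof
    assume "a = 0"
    with ab(2) have "q dvd (- p) ^ n" by (simp add: mod_eq_0_iff_dvd)
    moreover have "coprime q ((- p) ^ n)"
      using assms(1) by (simp add: coprime_iff_gcd_eq_1[symmetric] coprime_commute)
    ultimately have "is_unit q"
      using coprime_absorb_left by blast
    with assms(2) show False
      by simp
  qed
  with ab(1) that show ?thesis by blast
qed

lemma x_power_mult_x_plus_p_power: "peq p q ([:0, 1:] ^ n * [:p, 1:] ^ n) [:q ^ n:]"
proof -
  have "[:0, 1:] * [:p, 1:] = [:q:] + tpoly p q * 1"
    by (simp add: tpoly_def)
  then have "peq p q (([:0, 1:] * [:p, 1:]) ^ n) ([:q:] ^ n)"
    by (metis peq_add_tpoly_mult peq_power)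
  then show ?thesis
    unfolding power_mult_distrib poly_const_pow .
qed

section \<open>Strings in normal form\<close>

lemma Sigma_iff: "a \<in> Sigma q \<longleftrightarrow> \<bar>a\<bar> < \<bar>q\<bar>"
  unfolding Sigma_def by auto

lemma finite_Sigma: "finite (Sigma q)"
  by (simp add: Sigma_def)

lemma Poly_replicate_zero_append: "Poly (replicate n 0 @ w) = [:0, 1:] ^ n * Poly w"
  by (simp add: Poly_append monom_altdef)

lemma symmetric_division:
  fixes a q :: int
  assumes "q \<noteq> 0"
  obtains r k where "a = r + q * k" and "\<bar>r\<bar> < \<bar>q\<bar>" and "\<bar>q\<bar> * \<bar>k\<bar> \<le> \<bar>a\<bar>"
proof
  let ?k = "sgn a * sgn q * (\<bar>a\<bar> div \<bar>q\<bar>)" and ?r = "sgn a * (\<bar>a\<bar> mod \<bar>q\<bar>)"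
  have "a = sgn a * (\<bar>q\<bar> * (\<bar>a\<bar> div \<bar>q\<bar>) + \<bar>a\<bar> mod \<bar>q\<bar>)"
    by (simp add: mult_sgn_abs)
  then show "a = ?r + q * ?k"
    by (simp add: algebra_simps abs_sgn)
  show "\<bar>?r\<bar> < \<bar>q\<bar>"
    using assms by (simp add: abs_mult abs_sgn_eq pos_imp_zdiv_nonneg_iff)
  have "\<bar>q\<bar> * (\<bar>a\<bar> div \<bar>q\<bar>) \<le> \<bar>a\<bar>"
    using mult_div_mod_eq[of "\<bar>q\<bar>" "\<bar>a\<bar>"] pos_mod_sign[of "\<bar>q\<bar>" "\<bar>a\<bar>"] assms by linarith
  then show "\<bar>q\<bar> * \<bar>?k\<bar> \<le> \<bar>a\<bar>"
    using assms by (simp add: abs_mult abs_sgn_eq pos_imp_zdiv_nonneg_iff)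
qed

text \<open>Every class is represented by a string: divide the constant coefficient by q with a remainder
  in Sigma q and move the quotient into the class of the tail, using x^2 \<equiv> q - p x.
  The weight |A| + 2|B| does not increase and strictly decreases unless B = 0, in which case the new
  second coefficient is nonzero.\<close>

lemma ex_Sigma_string_peq:
  assumes "1 + \<bar>p\<bar> < \<bar>q\<bar>"
  shows "\<exists>w \<in> lists (Sigma q). peq p q (Poly w) [:A, B:]"
proof (induction "nat (2 * (\<bar>A\<bar> + 2 * \<bar>B\<bar>)) + (if B = 0 then 1 else 0)" arbitrary: A B
    rule: less_induct)
  case less
  show ?case
  proof (cases "\<bar>A\<bar> < \<bar>q\<bar> \<and> \<bar>B\<bar> < \<bar>q\<bar>")
    case True
    then show ?thesis
      by (intro bexI[of _ "[A, B]"]) (auto simp: Sigma_iff)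
  next
    case False
    from assms have "q \<noteq> 0" by auto
    then obtain r k where rk: "A = r + q * k" "\<bar>r\<bar> < \<bar>q\<bar>" "\<bar>q\<bar> * \<bar>k\<bar> \<le> \<bar>A\<bar>"
      by (rule symmetric_division)
    have "\<bar>B + p * k\<bar> \<le> \<bar>B\<bar> + \<bar>p\<bar> * \<bar>k\<bar>"
      by (metis abs_mult abs_triangle_ineq)
    moreover have "(\<bar>p\<bar> + 2) * \<bar>k\<bar> \<le> \<bar>q\<bar> * \<bar>k\<bar>"
      using assms by (intro mult_right_mono) auto
    ultimately have weight: "\<bar>B + p * k\<bar> + 2 * \<bar>k\<bar> \<le> \<bar>B\<bar> + \<bar>A\<bar>"
      using rk(3) by (simp add: algebra_simps)
    have "nat (2 * (\<bar>B + p * k\<bar> + 2 * \<bar>k\<bar>)) + (if k = 0 then 1 else 0)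
        < nat (2 * (\<bar>A\<bar> + 2 * \<bar>B\<bar>)) + (if B = 0 then 1 else 0)"
    proof (cases "B = 0")
      case True
      with False rk have "k \<noteq> 0" by auto
      with True weight show ?thesis by simp
    next
      case False
      then have "1 \<le> \<bar>B\<bar>" by linarith
      then have "X \<le> \<bar>B\<bar> + \<bar>A\<bar> \<Longrightarrow> 2 * X + 1 < 2 * (\<bar>A\<bar> + 2 * \<bar>B\<bar>)" for X :: int
        by presburger
      with weight have "2 * (\<bar>B + p * k\<bar> + 2 * \<bar>k\<bar>) + 1 < 2 * (\<bar>A\<bar> + 2 * \<bar>B\<bar>)" by blast
      with False show ?thesis by (cases "k = 0") (simp_all add: nat_add_distrib[symmetric])
    qed
    then obtain w where w: "w \<in> lists (Sigma q)" "peq p q (Poly w) [:B + p * k, k:]"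
      using less by blast
    have "peq p q (Poly (r # w)) [:r + k * q, B + p * k - k * p:]"
      using peq_pCons_linear[OF w(2)] by simp
    then have "peq p q (Poly (r # w)) [:A, B:]"
      using rk(1) by (simp add: algebra_simps)
    then show ?thesis
      using w(1) rk(2) by (intro bexI[of _ "r # w"]) (auto simp: Sigma_iff)
  qed
qed

lemma llex_less_iff_less: "llex_less v w \<longleftrightarrow> v < w"
  by (auto simp: llex_less_def list_less_def lenlex_conv lexord_lex)

lemma ex_Dom_str_equiv:
  assumes "w0 \<in> lists (Sigma q)"
  shows "\<exists>w \<in> Dom p q. str_equiv p q w w0"
proof -
  define E where "E = {v \<in> lists (Sigma q). length v \<le> length w0 \<and> str_equiv p q v w0}"
  define w where "w = Min E"
  have "finite E"
    unfolding E_def using finite_lists_length_le[OF finite_Sigma] by (rule rev_finite_subset) auto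
  moreover have "w0 \<in> E"
    using assms by (simp add: E_def str_equiv_def)
  ultimately have "w \<in> E" and w_le: "\<And>v. v \<in> E \<Longrightarrow> w \<le> v"
    unfolding w_def using Min_in Min_le by blast+
  have "v \<notin> lists (Sigma q)" if "v < w" "str_equiv p q v w" for v
  proof
    assume "v \<in> lists (Sigma q)"
    moreover have "length v \<le> length w"
      using \<open>v < w\<close> by (auto simp: list_less_def dest: lenlex_length)
    moreover have "str_equiv p q v w0"
      using that(2) \<open>w \<in> E\<close> unfolding E_def str_equiv_def by (blast intro: peq_trans)
    ultimately have "v \<in> E"
      using \<open>w \<in> E\<close> by (simp add: E_def)
    with w_le \<open>v < w\<close> show False by fastforce
  qed
  with \<open>w \<in> E\<close> have "w \<in> Dom p q"
    by (auto simp: Dom_def E_def llex_less_iff_less)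
  with \<open>w \<in> E\<close> show ?thesis
    by (auto simp: E_def)
qed

lemma ex_Dom_peq:
  assumes "1 + \<bar>p\<bar> < \<bar>q\<bar>"
  shows "\<exists>w \<in> Dom p q. peq p q (Poly w) f"
proof -
  obtain a b where ab: "peq p q f [:b, a:]"
    using peq_linear_exists by blast
  obtain w0 where "w0 \<in> lists (Sigma q)" "peq p q (Poly w0) [:b, a:]"
    using ex_Sigma_string_peq[OF assms] by blast
  moreover obtain w where "w \<in> Dom p q" "peq p q (Poly w) (Poly w0)"
    using ex_Dom_str_equiv[OF \<open>w0 \<in> lists (Sigma q)\<close>] by (auto simp: str_equiv_def strpoly_def)
  ultimately show ?thesis
    using ab by (blast intro: peq_trans peq_sym)
qed

lemma Dom_subset_lists: "Dom p q \<subseteq> lists (Sigma q)"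
  by (auto simp: Dom_def)

lemma Nil_in_Dom: "[] \<in> Dom p q"
  by (simp add: Dom_def llex_less_iff_less)

lemma Dom_eq_Nil_if_tpoly_dvd:
  assumes "w \<in> Dom p q" and "tpoly p q dvd Poly w"
  shows "w = []"
proof (rule ccontr)
  assume "w \<noteq> []"
  then have "[] < w" by (cases w) auto
  moreover have "str_equiv p q [] w"
    using assms(2) by (simp add: str_equiv_def strpoly_def peq_def)
  ultimately show False
    using assms(1) by (auto simp: Dom_def llex_less_iff_less)
qed

lemma zero_Cons_in_Dom:
  assumes "q \<noteq> 0" and w: "w \<in> Dom p q" "w \<noteq> []"
  shows "0 # w \<in> Dom p q"
proof -
  have "v \<notin> lists (Sigma q)" if "v < 0 # w" and equiv: "str_equiv p q v (0 # w)" for v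
  proof (cases v)
    case Nil
    then have "tpoly p q dvd pCons 0 (- Poly w)"
      using equiv by (simp add: str_equiv_def strpoly_def peq_def)
    then have "tpoly p q dvd Poly w"
      using tpoly_dvd_pCons_0_iff[OF assms(1)] by simp
    then show ?thesis
      using Dom_eq_Nil_if_tpoly_dvd w by blast
  next
    case (Cons b v')
    have dvd: "tpoly p q dvd pCons (b - 0) (Poly v' - Poly w)"
      using equiv Cons by (simp add: str_equiv_def strpoly_def peq_def)
    show ?thesis
    proof
      assume "v \<in> lists (Sigma q)"
      then have "\<bar>b\<bar> < \<bar>q\<bar>" using Cons by (simp add: Sigma_iff)
      moreover have "q dvd b"
        using tpoly_dvd_coeff_0[OF dvd] by simp
      ultimately have "b = 0"
        using dvd_imp_le_int by force
      then have "str_equiv p q v' w"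
        using dvd tpoly_dvd_pCons_0_iff[OF assms(1)] by (simp add: str_equiv_def strpoly_def peq_def)
      moreover have "v' < w"
        using \<open>v < 0 # w\<close> Cons \<open>b = 0\<close> by (auto simp: Cons_less_Cons list_less_def lenlex_conv)
      ultimately show False
        using w(1) \<open>v \<in> lists (Sigma q)\<close> Cons by (auto simp: Dom_def llex_less_iff_less)
    qed
  qed
  moreover have "0 \<in> Sigma q"
    using assms(1) by (simp add: Sigma_iff)
  ultimately show ?thesis
    using w(1) by (auto simp: Dom_def llex_less_iff_less)
qed

lemma replicate_zero_append_in_Dom:
  "q \<noteq> 0 \<Longrightarrow> w \<in> Dom p q \<Longrightarrow> w \<noteq> [] \<Longrightarrow> replicate n 0 @ w \<in> Dom p q"
  by (induction n) (auto intro: zero_Cons_in_Dom)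

lemma mem_psi_preimage_cyc_iff:
  "w \<in> psi_preimage p q (cyc (z1, z2)) \<longleftrightarrow>
    w \<in> Dom p q \<and> (\<exists>k. peq p q (Poly w) (smult k [:z2, z1:]))"
proof -
  have "psi p q w = (k * z1, k * z2) \<longleftrightarrow> peq p q (Poly w) [:k * z2, k * z1:]" for k
  proof
    assume "psi p q w = (k * z1, k * z2)"
    then show "peq p q (Poly w) [:k * z2, k * z1:]"
      using psi_peq[of p q w] by simp
  qed (rule psi_eqI)
  then show ?thesis
    by (simp add: psi_preimage_def cyc_def zscale_def)
qed

section \<open>Closure properties of regular languages\<close>

lemma foldl_in_closed:
  "\<forall>x\<in>Q. \<forall>a\<in>A. \<delta> x a \<in> Q \<Longrightarrow> x \<in> Q \<Longrightarrow> w \<in> lists A \<Longrightarrow> foldl \<delta> x w \<in> Q"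
  by (induction w arbitrary: x) auto

lemma regular_langE:
  assumes "regular_lang A L"
  obtains Q :: "nat set" and \<delta> s F where "finite Q" "s \<in> Q" "\<forall>x\<in>Q. \<forall>a\<in>A. \<delta> x a \<in> Q"
    and "L = {w \<in> lists A. foldl \<delta> s w \<in> F}"
  using assms unfolding regular_lang_def by blast

lemma regular_langI:
  fixes \<delta> :: "'s \<Rightarrow> 'a \<Rightarrow> 's"
  assumes fin: "finite Q" and s: "s \<in> Q" and closed: "\<forall>x\<in>Q. \<forall>a\<in>A. \<delta> x a \<in> Q"
  shows "regular_lang A {w \<in> lists A. foldl \<delta> s w \<in> F}"
proof -
  obtain g :: "'s \<Rightarrow> nat" where g: "inj_on g Q"
    using finite_imp_inj_to_nat_seg[OF fin] by blast
  define h where "h = inv_into Q g"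
  define \<delta>' where "\<delta>' n a = g (\<delta> (h n) a)" for n a
  have hg: "x \<in> Q \<Longrightarrow> h (g x) = x" for x
    unfolding h_def using g by simp
  have fold: "x \<in> Q \<Longrightarrow> w \<in> lists A \<Longrightarrow> foldl \<delta>' (g x) w = g (foldl \<delta> x w)" for x w
    by (induction w arbitrary: x) (auto simp: \<delta>'_def hg closed)
  have "foldl \<delta> s w \<in> F \<longleftrightarrow> foldl \<delta>' (g s) w \<in> g ` (F \<inter> Q)" if "w \<in> lists A" for w
    using fold[OF s that] foldl_in_closed[OF closed s that] g by (auto simp: inj_on_eq_iff)
  then have "{w \<in> lists A. foldl \<delta> s w \<in> F} = {w \<in> lists A. foldl \<delta>' (g s) w \<in> g ` (F \<inter> Q)}"
    by blast
  moreover have "\<forall>x\<in>g ` Q. \<forall>a\<in>A. \<delta>' x a \<in> g ` Q"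
    using closed hg by (auto simp: \<delta>'_def)
  ultimately show ?thesis
    unfolding regular_lang_def using fin s
    by (intro conjI exI[of _ "g ` Q"] exI[of _ \<delta>'] exI[of _ "g s"] exI[of _ "g ` (F \<inter> Q)"]) auto
qed

lemma regular_lang_combine:
  assumes "regular_lang A L1" and "regular_lang A L2"
  shows "regular_lang A {w \<in> lists A. P (w \<in> L1) (w \<in> L2)}"
proof -
  obtain Q1 :: "nat set" and \<delta>1 s1 F1 where A1: "finite Q1" "s1 \<in> Q1" "\<forall>x\<in>Q1. \<forall>a\<in>A. \<delta>1 x a \<in> Q1"
    and L1: "L1 = {w \<in> lists A. foldl \<delta>1 s1 w \<in> F1}"
    using assms(1) by (rule regular_langE)
  obtain Q2 :: "nat set" and \<delta>2 s2 F2 where A2: "finite Q2" "s2 \<in> Q2" "\<forall>x\<in>Q2. \<forall>a\<in>A. \<delta>2 x a \<in> Q2"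
    and L2: "L2 = {w \<in> lists A. foldl \<delta>2 s2 w \<in> F2}"
    using assms(2) by (rule regular_langE)
  define \<delta> where "\<delta> = (\<lambda>(x, y) a. (\<delta>1 x a, \<delta>2 y a))"
  have fold: "foldl \<delta> (x, y) w = (foldl \<delta>1 x w, foldl \<delta>2 y w)" for x y w
    by (induction w arbitrary: x y) (simp_all add: \<delta>_def)
  have "regular_lang A {w \<in> lists A. foldl \<delta> (s1, s2) w \<in> {(x, y). P (x \<in> F1) (y \<in> F2)}}"
    using A1 A2 by (intro regular_langI[of "Q1 \<times> Q2"]) (auto simp: \<delta>_def)
  also have "{w \<in> lists A. foldl \<delta> (s1, s2) w \<in> {(x, y). P (x \<in> F1) (y \<in> F2)}} =
      {w \<in> lists A. P (w \<in> L1) (w \<in> L2)}"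
    by (intro Collect_cong conj_cong refl) (simp add: fold L1 L2)
  finally show ?thesis .
qed

lemma regular_lang_Int:
  assumes "regular_lang A L1" and "regular_lang A L2"
  shows "regular_lang A (L1 \<inter> L2)"
proof -
  have "L1 \<inter> L2 = {w \<in> lists A. w \<in> L1 \<and> w \<in> L2}"
    using assms(1) by (auto simp: regular_lang_def)
  with regular_lang_combine[OF assms, of "(\<and>)"] show ?thesis by simp
qed

lemma regular_lang_Un:
  assumes "regular_lang A L1" and "regular_lang A L2"
  shows "regular_lang A (L1 \<union> L2)"
proof -
  have "L1 \<union> L2 = {w \<in> lists A. w \<in> L1 \<or> w \<in> L2}"
    using assms by (auto simp: regular_lang_def)
  with regular_lang_combine[OF assms, of "(\<or>)"] show ?thesis by simp
qed

lemma regular_lang_Diff: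
  assumes "regular_lang A L"
  shows "regular_lang A (lists A - L)"
proof -
  have "lists A - L = {w \<in> lists A. \<not> w \<in> L}"
    by blast
  with regular_lang_combine[OF assms assms, of "\<lambda>x y. \<not> x"] show ?thesis by simp
qed

lemma regular_lang_map_vimage:
  assumes "regular_lang B L" and "h ` A \<subseteq> B"
  shows "regular_lang A {w \<in> lists A. map h w \<in> L}"
proof -
  obtain Q :: "nat set" and \<delta> s F where "finite Q" "s \<in> Q" "\<forall>x\<in>Q. \<forall>b\<in>B. \<delta> x b \<in> Q"
    and L: "L = {w \<in> lists B. foldl \<delta> s w \<in> F}"
    using assms(1) by (rule regular_langE)
  with assms(2) have "regular_lang A {w \<in> lists A. foldl (\<lambda>x a. \<delta> x (h a)) s w \<in> F}"
    by (intro regular_langI[of Q]) auto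
  moreover have "w \<in> lists A \<Longrightarrow> map h w \<in> lists B" for w
    using assms(2) by (auto simp: image_subset_iff)
  ultimately show ?thesis
    by (simp add: L foldl_map cong: conj_cong)
qed

lemma foldl_powerset_step:
  "foldl (\<lambda>S a. {\<delta> x (a, b) | x b. x \<in> S \<and> b \<in> B}) S w =
    {foldl \<delta> x (zip w v) | x v. x \<in> S \<and> v \<in> lists B \<and> length v = length w}"
proof (induction w arbitrary: S)
  case Nil
  then show ?case by auto
next
  case (Cons a w)
  have "{foldl \<delta> x (zip w v) | x v. x \<in> {\<delta> x (a, b) | x b. x \<in> S \<and> b \<in> B} \<and> v \<in> lists B
      \<and> length v = length w} =
    {foldl \<delta> x (zip (a # w) v) | x v. x \<in> S \<and> v \<in> lists B \<and> length v = length (a # w)}"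
    (is "?l = ?r")
  proof (intro set_eqI iffI)
    fix y assume "y \<in> ?l"
    then obtain x b v where "y = foldl \<delta> (\<delta> x (a, b)) (zip w v)" "x \<in> S" "b \<in> B" "v \<in> lists B"
      "length v = length w" by blast
    then show "y \<in> ?r"
      by (intro CollectI exI[of _ x] exI[of _ "b # v"]) auto
  next
    fix y assume "y \<in> ?r"
    then obtain x v where "y = foldl \<delta> x (zip (a # w) v)" "x \<in> S" "v \<in> lists B"
      "length v = length (a # w)" by blast
    then show "y \<in> ?l"
      by (cases v) auto
  qed
  then show ?case
    by (simp add: Cons.IH)
qed

text \<open>Existential projection of the second track, by the powerset construction.\<close>

lemma regular_lang_project:
  assumes "regular_lang (A \<times> B) L"
  shows "regular_lang A {w \<in> lists A. \<exists>v \<in> lists B. length v = length w \<and> zip w v \<in> L}"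
proof -
  obtain Q :: "nat set" and \<delta> s F where Q: "finite Q" "s \<in> Q" "\<forall>x\<in>Q. \<forall>c\<in>A \<times> B. \<delta> x c \<in> Q"
    and L: "L = {w \<in> lists (A \<times> B). foldl \<delta> s w \<in> F}"
    using assms by (rule regular_langE)
  define \<Delta> where "\<Delta> S a = {\<delta> x (a, b) | x b. x \<in> S \<and> b \<in> B}" for S a
  have "regular_lang A {w \<in> lists A. foldl \<Delta> {s} w \<in> {S. S \<inter> F \<noteq> {}}}"
    using Q by (intro regular_langI[of "Pow Q"]) (auto simp: \<Delta>_def)
  moreover have "zip w v \<in> lists (A \<times> B)" if "w \<in> lists A" "v \<in> lists B" for w v
    using that by (auto dest: set_zip_leftD set_zip_rightD)
  then have "foldl \<Delta> {s} w \<in> {S. S \<inter> F \<noteq> {}} \<longleftrightarrow>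
      (\<exists>v \<in> lists B. length v = length w \<and> zip w v \<in> L)" if "w \<in> lists A" for w
    using that unfolding \<Delta>_def foldl_powerset_step L by blast
  ultimately show ?thesis
    by (simp cong: conj_cong)
qed

lemma regular_lang_last:
  "regular_lang A {w \<in> lists A. w \<noteq> [] \<and> P (last w)}"
proof -
  have "foldl (\<lambda>_. P) b w \<longleftrightarrow> (if w = [] then b else P (last w))" for b w
    by (induction w arbitrary: b) auto
  then have "foldl (\<lambda>_. P) False w \<longleftrightarrow> w \<noteq> [] \<and> P (last w)" for w
    by simp
  then show ?thesis
    using regular_langI[of UNIV False A "\<lambda>_. P" "{True}"] by simp
qed

lemma regular_lang_Nil: "regular_lang A {[]}"
proof -
  have "foldl (\<lambda>_ _. False) b w \<longleftrightarrow> b \<and> w = []" for b and w :: "'a list"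
    by (induction w arbitrary: b) auto
  moreover have "{w \<in> lists A. w = []} = {[]}"
    by auto
  ultimately show ?thesis
    using regular_langI[of UNIV True A "\<lambda>_ _. False" "{True}"] by simp
qed

text \<open>The state records whether a difference has been seen and, if so, its direction.\<close>

lemma regular_lang_lexord:
  "regular_lang (A \<times> A) {x \<in> lists (A \<times> A). (map snd x, map fst x) \<in> lexord R}"
proof -
  define \<delta> where "\<delta> c e = (case c of Some t \<Rightarrow> Some t
      | None \<Rightarrow> if (snd e, fst e) \<in> R then Some True else if snd e = fst e then None else Some False)"
    for c and e :: "'a \<times> 'a"
  have "foldl \<delta> (Some t) x = Some t" for t x
    by (induction x) (simp_all add: \<delta>_def)
  then have "foldl \<delta> None x = Some True \<longleftrightarrow> (map snd x, map fst x) \<in> lexord R" for x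
    by (induction x) (auto simp: \<delta>_def)
  then show ?thesis
    using regular_langI[of UNIV None "A \<times> A" \<delta> "{Some True}"] by simp
qed

lemma regular_lang_replicate_pump:
  assumes "regular_lang A L" and "a \<in> A"
  obtains n m where "n < m" and "\<And>w. replicate n a @ w \<in> L \<longleftrightarrow> replicate m a @ w \<in> L"
proof -
  obtain Q :: "nat set" and \<delta> s F where Q: "finite Q" "s \<in> Q" "\<forall>x\<in>Q. \<forall>a\<in>A. \<delta> x a \<in> Q"
    and L: "L = {w \<in> lists A. foldl \<delta> s w \<in> F}"
    using assms(1) by (rule regular_langE)
  define state where "state n = foldl \<delta> s (replicate n a)" for n
  have "replicate n a \<in> lists A" for n
    using assms(2) by (induction n) auto
  then have "range state \<subseteq> Q"
    using foldl_in_closed[OF Q(3,2)] by (auto simp: state_def)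
  then have "\<not> inj state"
    using Q(1) finite_subset range_inj_infinite by blast
  then obtain n m where "n < m" "state n = state m"
    unfolding inj_def by (metis linorder_neqE_nat)
  moreover have "replicate k a @ w \<in> L \<longleftrightarrow> w \<in> lists A \<and> foldl \<delta> (state k) w \<in> F" for k w
    using assms(2) by (auto simp: L state_def)
  ultimately show ?thesis
    using that by presburger
qed

section \<open>Non-regularity when the norm does not vanish\<close>

lemma class_norm_eq_0_if_x_power_keeps_line:
  assumes "peq p q ([:0, 1:] ^ Suc d * smult c [:z2, z1:]) (smult k [:z2, z1:])"
    and "c \<noteq> 0" and "gcd p q = 1" and "\<bar>q\<bar> > 1"
  shows "class_norm p q (z1, z2) = 0"
proof -
  obtain a b where ab: "peq p q ([:0, 1:] ^ Suc d) [:b, a:]" "a \<noteq> 0"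
    using assms(3,4) by (rule x_power_peq_linear_nonzero)
  have "smult c ([:b, a:] * [:z2, z1:]) = [:b, a:] * smult c [:z2, z1:]"
    by (rule mult_smult_right[symmetric])
  also have "peq p q \<dots> ([:0, 1:] ^ Suc d * smult c [:z2, z1:])"
    using peq_sym[OF ab(1)] peq_refl by (rule peq_mult)
  also note assms(1)
  finally have "peq p q (smult c ([:b, a:] * [:z2, z1:])) [:k * z2, k * z1:]"
    by (simp only: smult_pCons smult_0_right)
  then show ?thesis
    using ab(2) assms(2) by (rule class_norm_eq_0_if_eigenvector)
qed

lemma not_regular_psi_preimage_cyc:
  assumes pq: "1 + \<bar>p\<bar> < \<bar>q\<bar>" and "gcd p q = 1" and norm: "class_norm p q (z1, z2) \<noteq> 0"
  shows "\<not> regular_lang (Sigma q) (psi_preimage p q (cyc (z1, z2)))"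
proof
  let ?L = "psi_preimage p q (cyc (z1, z2))" and ?Z = "[:z2, z1:]"
  assume reg: "regular_lang (Sigma q) ?L"
  from pq have "q \<noteq> 0" by auto
  then have "0 \<in> Sigma q" by (simp add: Sigma_iff)
  with reg obtain n m where "n < m" and pump: "\<And>w. replicate n 0 @ w \<in> ?L \<longleftrightarrow> replicate m 0 @ w \<in> ?L"
    by (rule regular_lang_replicate_pump) blast
  obtain w where w: "w \<in> Dom p q" "peq p q (Poly w) ([:p, 1:] ^ n * ?Z)"
    using ex_Dom_peq[OF pq] by blast
  have "Poly (replicate n 0 @ w) = [:0, 1:] ^ n * Poly w"
    by (rule Poly_replicate_zero_append)
  also have "peq p q \<dots> ([:0, 1:] ^ n * [:p, 1:] ^ n * ?Z)"
    unfolding mult.assoc using peq_refl w(2) by (rule peq_mult)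
  also have "peq p q \<dots> ([:q ^ n:] * ?Z)"
    using x_power_mult_x_plus_p_power peq_refl by (rule peq_mult)
  also have "[:q ^ n:] * ?Z = smult (q ^ n) ?Z"
    by simp
  finally have wn: "peq p q (Poly (replicate n 0 @ w)) (smult (q ^ n) ?Z)" .
  have "w \<noteq> []"
  proof
    assume "w = []"
    with wn have "peq p q [:0, 0:] [:q ^ n * z2, q ^ n * z1:]" by simp
    with \<open>q \<noteq> 0\<close> have "z1 = 0" "z2 = 0" by (simp_all only: peq_linear_iff) simp_all
    with norm show False by (simp add: class_norm_def)
  qed
  with wn w(1) \<open>q \<noteq> 0\<close> have "replicate n 0 @ w \<in> ?L"
    unfolding mem_psi_preimage_cyc_iff by (blast intro: replicate_zero_append_in_Dom)
  then have "replicate m 0 @ w \<in> ?L"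
    using pump by blast
  then obtain k where k: "peq p q (Poly (replicate m 0 @ w)) (smult k ?Z)"
    unfolding mem_psi_preimage_cyc_iff by blast
  define d where "d = m - n - 1"
  with \<open>n < m\<close> have "m = Suc d + n" by simp
  then have "Poly (replicate m 0 @ w) = [:0, 1:] ^ Suc d * Poly (replicate n 0 @ w)"
    by (simp only: Poly_replicate_zero_append power_add mult.assoc)
  with k have "peq p q ([:0, 1:] ^ Suc d * smult (q ^ n) ?Z) (smult k ?Z)"
    using peq_mult[OF peq_refl peq_sym[OF wn]] by (metis peq_trans)
  moreover have "q ^ n \<noteq> 0"
    using \<open>q \<noteq> 0\<close> by simp
  moreover note \<open>gcd p q = 1\<close>
  moreover have "\<bar>q\<bar> > 1"
    using pq abs_ge_zero[of p] by linarith
  ultimately have "class_norm p q (z1, z2) = 0"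
    by (rule class_norm_eq_0_if_x_power_keeps_line)
  with norm show False ..
qed

section \<open>Regularity when the norm vanishes\<close>

lemma finite_int_set_bounded:
  fixes D :: "int set"
  assumes "finite D"
  obtains K where "0 \<le> K" and "D \<subseteq> {-K..K}"
proof
  show "0 \<le> (\<Sum>d\<in>D. \<bar>d\<bar>)"
    by (rule sum_nonneg) simp
  have "\<bar>d\<bar> \<le> (\<Sum>d\<in>D. \<bar>d\<bar>)" if "d \<in> D" for d
    using assms that by (intro member_le_sum) auto
  then show "D \<subseteq> {-(\<Sum>d\<in>D. \<bar>d\<bar>)..(\<Sum>d\<in>D. \<bar>d\<bar>)}"
    by (auto simp: abs_le_iff) (metis minus_le_iff)
qed

text \<open>Deciding divisibility by t while reading the coefficients from the lowest one: the state
  Some (u, v) records that the unread part must be congruent to v x + u + p v.\<close>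

definition tpoly_carry :: "int \<Rightarrow> int \<Rightarrow> (int \<times> int) option \<Rightarrow> int \<Rightarrow> (int \<times> int) option" where
  "tpoly_carry p q c a = (case c of None \<Rightarrow> None | Some (u, v) \<Rightarrow>
     if q dvd u + p * v - a then Some (v, (u + p * v - a) div q) else None)"

lemma foldl_tpoly_carry_None: "foldl (tpoly_carry p q) None d = None"
  by (induction d) (simp_all add: tpoly_carry_def)

lemma foldl_tpoly_carry_iff:
  assumes "q \<noteq> 0"
  shows "foldl (tpoly_carry p q) (Some (u, v)) d = Some (0, 0) \<longleftrightarrow>
    tpoly p q dvd Poly d - [:u + p * v, v:]"
proof (induction d arbitrary: u v)
  case Nil
  have "tpoly p q dvd - [:u + p * v, v:] \<longleftrightarrow> u = 0 \<and> v = 0"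
    using tpoly_dvd_linear_iff[of p q "- (u + p * v)" "- v"] by auto
  then show ?case by simp
next
  case (Cons a d)
  show ?case
  proof (cases "q dvd u + p * v - a")
    case True
    then obtain g where g: "u + p * v - a = q * g" by (elim dvdE)
    have "Poly (a # d) - [:u + p * v, v:] = pCons 0 (Poly d - [:v + p * g, g:]) + tpoly p q * [:g:]"
      using g by (simp add: tpoly_def algebra_simps)
    then have "tpoly p q dvd Poly (a # d) - [:u + p * v, v:] \<longleftrightarrow>
        tpoly p q dvd pCons 0 (Poly d - [:v + p * g, g:])"
      by (simp only: dvd_add_left_iff[OF dvd_triv_left])
    also have "\<dots> \<longleftrightarrow> tpoly p q dvd Poly d - [:v + p * g, g:]"
      by (rule tpoly_dvd_pCons_0_iff[OF assms])
    finally have "tpoly p q dvd Poly (a # d) - [:u + p * v, v:] \<longleftrightarrow>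
        tpoly p q dvd Poly d - [:v + p * g, g:]" .
    moreover have "tpoly_carry p q (Some (u, v)) a = Some (v, g)"
      using True g assms by (simp add: tpoly_carry_def)
    ultimately show ?thesis
      using Cons.IH by simp
  next
    case False
    have "\<not> tpoly p q dvd Poly (a # d) - [:u + p * v, v:]"
    proof
      assume "tpoly p q dvd Poly (a # d) - [:u + p * v, v:]"
      from tpoly_dvd_coeff_0[OF this] have "q dvd a - (u + p * v)"
        by simp
      with False show False
        by (simp add: dvd_diff_commute)
    qed
    moreover have "tpoly_carry p q (Some (u, v)) a = None"
      using False by (simp add: tpoly_carry_def)
    ultimately show ?thesis
      by (simp add: foldl_tpoly_carry_None)
  qed
qed

text \<open>The carries stay bounded because |q| \<ge> |p| + 2 dominates the other coefficients of t.\<close>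

lemma tpoly_carry_bounded:
  assumes "1 + \<bar>p\<bar> < \<bar>q\<bar>" and "\<bar>u\<bar> \<le> K" "\<bar>v\<bar> \<le> K" "\<bar>a\<bar> \<le> K"
    and "tpoly_carry p q (Some (u, v)) a = Some (v', g)"
  shows "\<bar>g\<bar> \<le> K"
proof -
  from assms(5) have "u + p * v - a = q * g" and "v' = v"
    by (auto simp: tpoly_carry_def split: if_splits)
  then have "\<bar>q\<bar> * \<bar>g\<bar> = \<bar>u + p * v - a\<bar>"
    by (simp add: abs_mult)
  also have "\<dots> \<le> \<bar>u\<bar> + \<bar>p\<bar> * \<bar>v\<bar> + \<bar>a\<bar>"
    using abs_triangle_ineq4[of "u + p * v" a] abs_triangle_ineq[of u "p * v"] by (simp add: abs_mult)
  also have "\<dots> \<le> (\<bar>p\<bar> + 2) * K"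
    using assms(2-4) mult_left_mono[OF assms(3), of "\<bar>p\<bar>"] by (simp add: algebra_simps)
  also have "\<dots> \<le> \<bar>q\<bar> * K"
    using assms(1,2) by (intro mult_right_mono) auto
  finally have "\<bar>q\<bar> * \<bar>g\<bar> \<le> \<bar>q\<bar> * K" .
  moreover have "0 < \<bar>q\<bar>"
    using assms(1) abs_ge_zero[of p] by linarith
  ultimately show ?thesis
    by (simp add: mult_le_cancel_left_pos)
qed

lemma regular_lang_tpoly_dvd:
  assumes "1 + \<bar>p\<bar> < \<bar>q\<bar>" and "finite D"
  shows "regular_lang D {d \<in> lists D. tpoly p q dvd Poly d}"
proof -
  obtain K where K: "0 \<le> K" "D \<subseteq> {-K..K}"
    using assms(2) by (rule finite_int_set_bounded)
  define Q where "Q = insert None (Some ` ({-K..K} \<times> {-K..K}))"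
  have "tpoly_carry p q c a \<in> Q" if "c \<in> Q" "a \<in> D" for c a
  proof (cases "tpoly_carry p q c a")
    case (Some e)
    then have "c \<noteq> None"
      by (cases c) (simp_all add: tpoly_carry_def)
    with \<open>c \<in> Q\<close> obtain u v where c: "c = Some (u, v)" "u \<in> {-K..K}" "v \<in> {-K..K}"
      unfolding Q_def by blast
    then have "\<bar>u\<bar> \<le> K" "\<bar>v\<bar> \<le> K"
      by (simp_all add: abs_le_iff)
    obtain v' g where e: "e = (v', g)" by fastforce
    have "\<bar>a\<bar> \<le> K"
      using K(2) \<open>a \<in> D\<close> by (auto simp: abs_le_iff)
    have carry: "tpoly_carry p q (Some (u, v)) a = Some (v', g)"
      using Some c e by simp
    then have "v' = v"
      by (simp add: tpoly_carry_def split: if_splits)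
    moreover have "\<bar>g\<bar> \<le> K"
      using assms(1) \<open>\<bar>u\<bar> \<le> K\<close> \<open>\<bar>v\<bar> \<le> K\<close> \<open>\<bar>a\<bar> \<le> K\<close> carry
      by (rule tpoly_carry_bounded)
    ultimately show ?thesis
      using Some c(3) e by (simp add: Q_def abs_le_iff)
  qed (simp add: Q_def)
  then have "regular_lang D {d \<in> lists D. foldl (tpoly_carry p q) (Some (0, 0)) d \<in> {Some (0, 0)}}"
    using K by (intro regular_langI[of Q]) (auto simp: Q_def)
  moreover from assms(1) have "q \<noteq> 0" by auto
  ultimately show ?thesis
    by (simp add: foldl_tpoly_carry_iff)
qed

text \<open>The same carry technique decides whether s is a root: the state Some c records that
  c + f(s) = 0 is required of the polynomial f of the unread part.\<close>

definition root_carry :: "int \<Rightarrow> int option \<Rightarrow> int \<Rightarrow> int option" where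
  "root_carry s c a = (case c of None \<Rightarrow> None | Some c \<Rightarrow>
     if s dvd c + a then Some ((c + a) div s) else None)"

lemma foldl_root_carry_None: "foldl (root_carry s) None d = None"
  by (induction d) (simp_all add: root_carry_def)

lemma foldl_root_carry_iff:
  assumes "s \<noteq> 0"
  shows "foldl (root_carry s) (Some c) d = Some 0 \<longleftrightarrow> c + poly (Poly d) s = 0"
proof (induction d arbitrary: c)
  case (Cons a d)
  show ?case
  proof (cases "s dvd c + a")
    case True
    then obtain g where g: "c + a = s * g" by (elim dvdE)
    then have "root_carry s (Some c) a = Some g"
      using assms by (simp add: root_carry_def)
    moreover have "c + poly (Poly (a # d)) s = s * (g + poly (Poly d) s)"
      using g by (simp add: algebra_simps)
    ultimately show ?thesis
      using Cons.IH assms by simp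
  next
    case False
    have "c + poly (Poly (a # d)) s \<noteq> 0"
    proof
      assume "c + poly (Poly (a # d)) s = 0"
      then have "c + a = s * (- poly (Poly d) s)"
        by (simp add: algebra_simps)
      with False show False by simp
    qed
    moreover have "root_carry s (Some c) a = None"
      using False by (simp add: root_carry_def)
    ultimately show ?thesis
      by (simp add: foldl_root_carry_None)
  qed
qed simp

lemma regular_lang_poly_root:
  fixes s :: int
  assumes "2 \<le> \<bar>s\<bar>" and "finite A"
  shows "regular_lang A {w \<in> lists A. poly (Poly w) s = 0}"
proof -
  obtain K where K: "0 \<le> K" "A \<subseteq> {-K..K}"
    using assms(2) by (rule finite_int_set_bounded)
  define Q where "Q = insert None (Some ` {-K..K})"
  have "root_carry s c a \<in> Q" if "c \<in> Q" "a \<in> A" for c a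
  proof (cases "root_carry s c a")
    case (Some g)
    then obtain c' where c: "c = Some c'" "s dvd c' + a" "g = (c' + a) div s"
      by (cases c) (auto simp: root_carry_def split: if_splits)
    with \<open>c \<in> Q\<close> have "\<bar>c'\<bar> \<le> K"
      by (auto simp: Q_def abs_le_iff)
    moreover have "\<bar>a\<bar> \<le> K"
      using K(2) \<open>a \<in> A\<close> by (auto simp: abs_le_iff)
    moreover have "\<bar>s\<bar> * \<bar>g\<bar> = \<bar>c' + a\<bar>"
      using c by (simp add: abs_mult[symmetric])
    moreover have "2 * \<bar>g\<bar> \<le> \<bar>s\<bar> * \<bar>g\<bar>"
      using assms(1) by (intro mult_right_mono) auto
    ultimately have "\<bar>g\<bar> \<le> K"
      by linarith
    then show ?thesis
      using Some by (simp add: Q_def abs_le_iff)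
  qed (simp add: Q_def)
  then have "regular_lang A {w \<in> lists A. foldl (root_carry s) (Some 0) w \<in> {Some 0}}"
    using K by (intro regular_langI[of Q]) (auto simp: Q_def)
  moreover from assms(1) have "s \<noteq> 0" by auto
  ultimately show ?thesis
    by (simp add: foldl_root_carry_iff)
qed

lemma regular_lang_poly_dvd:
  fixes r M :: int
  assumes "0 < M"
  shows "regular_lang A {w \<in> lists A. M dvd poly (Poly w) r}"
proof -
  define \<delta> where "\<delta> = (\<lambda>(x, y) a. (x * r mod M, (y + a * x) mod M))"
  have fold: "foldl \<delta> (1 mod M, 0) w = (r ^ length w mod M, poly (Poly w) r mod M)" for w
  proof (induction w rule: rev_induct)
    case (snoc a w)
    have "poly (Poly (w @ [a])) r = poly (Poly w) r + a * r ^ length w"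
      by (simp add: Poly_snoc poly_monom)
    moreover have "(poly (Poly w) r + a * (r ^ length w mod M)) mod M =
        (poly (Poly w) r + a * r ^ length w) mod M"
      by (metis mod_add_right_eq mod_mult_right_eq)
    ultimately show ?case
      using snoc by (simp add: \<delta>_def mod_add_left_eq mod_mult_left_eq mod_mult_right_eq mult.commute)
  qed simp
  have "regular_lang A {w \<in> lists A. foldl \<delta> (1 mod M, 0) w \<in> UNIV \<times> {0}}"
    using assms by (intro regular_langI[of "{0..<M} \<times> {0..<M}"]) (auto simp: \<delta>_def)
  then show ?thesis
    by (simp add: fold dvd_eq_mod_eq_0)
qed

lemma str_equiv_iff_tpoly_dvd: "str_equiv p q v w \<longleftrightarrow> tpoly p q dvd Poly w - Poly v"
  unfolding str_equiv_def strpoly_def peq_def by (metis dvd_minus_iff minus_diff_eq)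

text \<open>A smaller equivalent string, padded with zeros to the same length, either ends with a zero
  or is lexicographically smaller; so Dom is described by comparisons of equally long strings.\<close>

lemma ex_smaller_str_equiv_iff:
  assumes "q \<noteq> 0"
  shows "(\<exists>v \<in> lists (Sigma q). llex_less v w \<and> str_equiv p q v w) \<longleftrightarrow>
    (\<exists>v \<in> lists (Sigma q). length v = length w \<and> tpoly p q dvd Poly w - Poly v \<and>
      (v \<noteq> [] \<and> last v = 0 \<or> (v, w) \<in> lexord {(a, b). a < b}))"
proof
  assume "\<exists>v \<in> lists (Sigma q). llex_less v w \<and> str_equiv p q v w"
  then obtain v where v: "v \<in> lists (Sigma q)" "llex_less v w" "tpoly p q dvd Poly w - Poly v"
    by (auto simp: str_equiv_iff_tpoly_dvd)
  show "\<exists>v \<in> lists (Sigma q). length v = length w \<and> tpoly p q dvd Poly w - Poly v \<and>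
      (v \<noteq> [] \<and> last v = 0 \<or> (v, w) \<in> lexord {(a, b). a < b})"
  proof (cases "length v < length w")
    case True
    let ?v = "v @ replicate (length w - length v) 0"
    have "?v \<in> lists (Sigma q)"
      using v(1) assms by (auto simp: Sigma_iff)
    with True v(3) show ?thesis
      by (intro bexI[of _ ?v]) auto
  next
    case False
    with v show ?thesis
      by (auto simp: llex_less_def)
  qed
next
  assume "\<exists>v \<in> lists (Sigma q). length v = length w \<and> tpoly p q dvd Poly w - Poly v \<and>
      (v \<noteq> [] \<and> last v = 0 \<or> (v, w) \<in> lexord {(a, b). a < b})"
  then obtain v where v: "v \<in> lists (Sigma q)" "length v = length w" "str_equiv p q v w"
    and last_lex: "v \<noteq> [] \<and> last v = 0 \<or> (v, w) \<in> lexord {(a, b). a < b}"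
    by (auto simp: str_equiv_iff_tpoly_dvd)
  show "\<exists>v \<in> lists (Sigma q). llex_less v w \<and> str_equiv p q v w"
    using last_lex
  proof
    assume "v \<noteq> [] \<and> last v = 0"
    then have "Poly (butlast v) = Poly v"
      by (metis Poly_snoc_zero append_butlast_last_id)
    moreover have "butlast v \<in> lists (Sigma q)"
      using v(1) by (auto dest: in_set_butlastD)
    moreover have "w \<noteq> []"
      using v(2) \<open>v \<noteq> [] \<and> last v = 0\<close> by auto
    then have "llex_less (butlast v) w"
      using v(2) by (simp add: llex_less_def)
    ultimately show ?thesis
      using v(3) by (intro bexI[of _ "butlast v"]) (auto simp: str_equiv_def strpoly_def)
  next
    assume "(v, w) \<in> lexord {(a, b). a < b}"
    with v show ?thesis
      by (auto simp: llex_less_def)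
  qed
qed

lemma Dom_eq_lists_Diff:
  assumes "q \<noteq> 0"
  shows "Dom p q = lists (Sigma q) - {w \<in> lists (Sigma q). \<exists>v \<in> lists (Sigma q).
    length v = length w \<and> tpoly p q dvd Poly w - Poly v \<and>
    (v \<noteq> [] \<and> last v = 0 \<or> (v, w) \<in> lexord {(a, b). a < b})}"
  by (rule set_eqI) (auto simp: Dom_def ex_smaller_str_equiv_iff[OF assms])

lemma regular_lang_smaller_equivalent:
  assumes "1 + \<bar>p\<bar> < \<bar>q\<bar>"
  shows "regular_lang (Sigma q \<times> Sigma q) {x \<in> lists (Sigma q \<times> Sigma q).
    tpoly p q dvd Poly (map (\<lambda>(a, b). a - b) x) \<and>
    (x \<noteq> [] \<and> snd (last x) = 0 \<or> (map snd x, map fst x) \<in> lexord {(a, b). a < b})}"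
    (is "regular_lang ?A ?L")
proof -
  let ?d = "\<lambda>(a, b). a - b :: int"
  let ?D = "?d ` ?A"
  have "regular_lang ?D {d \<in> lists ?D. tpoly p q dvd Poly d}"
    using assms finite_Sigma by (intro regular_lang_tpoly_dvd) auto
  then have "regular_lang ?A {x \<in> lists ?A. map ?d x \<in> {d \<in> lists ?D. tpoly p q dvd Poly d}}"
    by (rule regular_lang_map_vimage) blast
  moreover have "regular_lang ?A {x \<in> lists ?A. x \<noteq> [] \<and> snd (last x) = 0}"
    using regular_lang_last[of ?A "\<lambda>e. snd e = 0"] by simp
  ultimately have "regular_lang ?A ({x \<in> lists ?A. map ?d x \<in> {d \<in> lists ?D. tpoly p q dvd Poly d}} \<inter>
      ({x \<in> lists ?A. x \<noteq> [] \<and> snd (last x) = 0} \<union>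
       {x \<in> lists ?A. (map snd x, map fst x) \<in> lexord {(a, b). a < b}}))"
    by (intro regular_lang_Int regular_lang_Un regular_lang_lexord)
  moreover have "map ?d x \<in> lists ?D" if "x \<in> lists ?A" for x
    using imageI[OF that, of "map ?d"] by (simp add: lists_image)
  ultimately show ?thesis
    by (elim back_subst[of "regular_lang ?A"]) blast
qed

lemma Poly_map_diff_zip:
  "length v = length w \<Longrightarrow> Poly (map (\<lambda>(a, b). a - b) (zip w v)) = Poly w - Poly v"
  by (induction w v rule: list_induct2') auto

lemma regular_lang_Dom:
  assumes "1 + \<bar>p\<bar> < \<bar>q\<bar>"
  shows "regular_lang (Sigma q) (Dom p q)"
proof -
  let ?S = "Sigma q"
  let ?lex = "lexord {(a, b :: int). a < b}"
  have "zip w v \<noteq> [] \<and> snd (last (zip w v)) = 0 \<longleftrightarrow> v \<noteq> [] \<and> last v = 0"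
    if "length v = length w" for w v :: "int list"
  proof (cases "v = []")
    case False
    with that have "w \<noteq> []" by auto
    with False that show ?thesis by (simp add: last_zip)
  qed simp
  moreover have "zip w v \<in> lists (?S \<times> ?S)" if "w \<in> lists ?S" "v \<in> lists ?S" for w v
    using that by (auto dest: set_zip_leftD set_zip_rightD)
  ultimately have "(\<exists>v \<in> lists ?S. length v = length w \<and> zip w v \<in> {x \<in> lists (?S \<times> ?S).
        tpoly p q dvd Poly (map (\<lambda>(a, b). a - b) x) \<and>
        (x \<noteq> [] \<and> snd (last x) = 0 \<or> (map snd x, map fst x) \<in> ?lex)}) \<longleftrightarrow>
      (\<exists>v \<in> lists ?S. length v = length w \<and> tpoly p q dvd Poly w - Poly v \<and>
        (v \<noteq> [] \<and> last v = 0 \<or> (v, w) \<in> ?lex))" if "w \<in> lists ?S" for w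
    using that by (intro bex_cong refl) (auto simp: Poly_map_diff_zip)
  then have "{w \<in> lists ?S. \<exists>v \<in> lists ?S. length v = length w \<and> zip w v \<in> {x \<in> lists (?S \<times> ?S).
        tpoly p q dvd Poly (map (\<lambda>(a, b). a - b) x) \<and>
        (x \<noteq> [] \<and> snd (last x) = 0 \<or> (map snd x, map fst x) \<in> ?lex)}} =
      {w \<in> lists ?S. \<exists>v \<in> lists ?S. length v = length w \<and> tpoly p q dvd Poly w - Poly v \<and>
        (v \<noteq> [] \<and> last v = 0 \<or> (v, w) \<in> ?lex)}"
    by (intro Collect_cong conj_cong refl)
  moreover from assms have "q \<noteq> 0" by auto
  ultimately show ?thesis
    using regular_lang_Diff[OF regular_lang_project[OF regular_lang_smaller_equivalent[OF assms]]]
    by (simp add: Dom_eq_lists_Diff)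
qed

lemma poly_eq_if_peq_at_root:
  assumes "peq p q f g" and "x\<^sup>2 + p * x - q = 0"
  shows "poly f x = poly g x"
proof -
  obtain h where "f - g = tpoly p q * h"
    using assms(1) unfolding peq_def by (rule dvdE)
  moreover have "poly (tpoly p q) x = 0"
    using assms(2) by (simp add: tpoly_def power2_eq_square algebra_simps)
  ultimately have "poly (f - g) x = 0"
    by simp
  then show ?thesis
    by simp
qed

text \<open>A class h1 x + h2 lies on the eigenline of the root s iff it vanishes at s; its value at the
  other root r = -p - s is then h1 (r - s), which detects whether h1 is a multiple of z1.\<close>

lemma mem_psi_preimage_eigenline_iff:
  assumes root: "s\<^sup>2 + p * s - q = 0" and "p + 2 * s \<noteq> 0" and z2: "z2 = - s * z1"
  shows "w \<in> psi_preimage p q (cyc (z1, z2)) \<longleftrightarrow>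
    w \<in> Dom p q \<and> poly (Poly w) s = 0 \<and> z1 * (p + 2 * s) dvd poly (Poly w) (- p - s)"
proof -
  have root': "(- p - s)\<^sup>2 + p * (- p - s) - q = 0"
    using root by (simp add: power2_eq_square algebra_simps)
  have "(\<exists>k. peq p q (Poly w) (smult k [:- s * z1, z1:])) \<longleftrightarrow>
      poly (Poly w) s = 0 \<and> z1 * (p + 2 * s) dvd poly (Poly w) (- p - s)"
  proof
    assume "\<exists>k. peq p q (Poly w) (smult k [:- s * z1, z1:])"
    then obtain k where k: "peq p q (Poly w) (smult k [:- s * z1, z1:])" ..
    have "poly (Poly w) s = 0"
      using poly_eq_if_peq_at_root[OF k root] by (simp add: algebra_simps)
    moreover have "poly (Poly w) (- p - s) = z1 * (p + 2 * s) * (- k)"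
      using poly_eq_if_peq_at_root[OF k root'] by (simp add: algebra_simps)
    ultimately show "poly (Poly w) s = 0 \<and> z1 * (p + 2 * s) dvd poly (Poly w) (- p - s)"
      by simp
  next
    assume evals: "poly (Poly w) s = 0 \<and> z1 * (p + 2 * s) dvd poly (Poly w) (- p - s)"
    obtain h1 h2 where h: "peq p q (Poly w) [:h2, h1:]"
      using peq_linear_exists by blast
    have "h2 = - s * h1"
      using evals poly_eq_if_peq_at_root[OF h root] by (simp add: algebra_simps)
    moreover have "poly (Poly w) (- p - s) = - (h1 * (p + 2 * s))"
      using poly_eq_if_peq_at_root[OF h root'] \<open>h2 = - s * h1\<close> by (simp add: algebra_simps)
    with evals have "z1 * (p + 2 * s) dvd h1 * (p + 2 * s)"
      by simp
    with assms(2) have "z1 dvd h1"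
      by simp
    then obtain k where "h1 = z1 * k" ..
    ultimately have "peq p q (Poly w) (smult k [:- s * z1, z1:])"
      using h by (simp add: algebra_simps)
    then show "\<exists>k. peq p q (Poly w) (smult k [:- s * z1, z1:])" ..
  qed
  then show ?thesis
    by (simp add: mem_psi_preimage_cyc_iff z2)
qed

lemma dvd_if_class_norm_eq_0:
  assumes "class_norm p q (z1, z2) = 0"
  shows "z1 dvd z2"
proof (cases "z1 = 0")
  case True
  with assms show ?thesis by (simp add: class_norm_def)
next
  case False
  then have "gcd z1 z2 \<noteq> 0" by simp
  then obtain a b where ab: "z1 = a * gcd z1 z2" "z2 = b * gcd z1 z2" "coprime a b"
    using gcd_coprime_exists by blast
  obtain g where g: "g = gcd z1 z2" "g \<noteq> 0"
    using \<open>gcd z1 z2 \<noteq> 0\<close> by blast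
  have "g\<^sup>2 * (b\<^sup>2 - p * a * b - q * a\<^sup>2) = class_norm p q (a * g, b * g)"
    by (simp add: class_norm_def power2_eq_square algebra_simps)
  also have "\<dots> = 0"
    using assms ab(1,2) g(1) by simp
  finally have "b\<^sup>2 - p * a * b - q * a\<^sup>2 = 0"
    using g(2) by simp
  moreover have "a * (p * b + q * a) = p * a * b + q * a\<^sup>2"
    by (simp add: power2_eq_square algebra_simps)
  ultimately have "b\<^sup>2 = a * (p * b + q * a)"
    by linarith
  then have "a dvd b\<^sup>2" by simp
  moreover have "coprime a (b\<^sup>2)"
    using ab(3) by simp
  ultimately have "is_unit a"
    using coprime_absorb_left by blast
  then have "a dvd b"
    by (rule unit_imp_dvd)
  then show ?thesis
    using ab(1,2) mult_dvd_mono[OF _ dvd_refl] by metis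
qed

lemma psi_preimage_cyc_zero: "psi_preimage p q (cyc (0, 0)) = {[]}"
proof -
  have "w \<in> psi_preimage p q (cyc (0, 0)) \<longleftrightarrow> w \<in> Dom p q \<and> tpoly p q dvd Poly w" for w
    by (simp add: mem_psi_preimage_cyc_iff peq_def)
  then show ?thesis
    using Dom_eq_Nil_if_tpoly_dvd Nil_in_Dom by auto
qed

text \<open>A vanishing norm means that z spans the eigenline of a root s of t in \<int>. This root is at
  least 2 in absolute value since |q| > 1 + |p|, and it is simple since p and q are coprime.\<close>

lemma root_if_class_norm_eq_0:
  assumes pq: "1 + \<bar>p\<bar> < \<bar>q\<bar>" and "gcd p q = 1" and norm: "class_norm p q (z1, z2) = 0"
    and "z1 \<noteq> 0"
  obtains s where "s\<^sup>2 + p * s - q = 0" and "z2 = - s * z1" and "2 \<le> \<bar>s\<bar>" and "p + 2 * s \<noteq> 0"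
proof -
  obtain l where l: "z2 = z1 * l"
    using dvd_if_class_norm_eq_0[OF norm] ..
  define s where "s = - l"
  have z2: "z2 = - s * z1"
    by (simp add: l s_def)
  have "z1\<^sup>2 * (s\<^sup>2 + p * s - q) = class_norm p q (z1, z2)"
    by (simp add: class_norm_def z2 power2_eq_square algebra_simps)
  with norm \<open>z1 \<noteq> 0\<close> have root: "s\<^sup>2 + p * s - q = 0"
    by simp
  then have q: "q = s * (s + p)"
    by (simp add: power2_eq_square algebra_simps)
  have "2 \<le> \<bar>s\<bar>"
  proof (rule ccontr)
    assume "\<not> 2 \<le> \<bar>s\<bar>"
    then have "s = 0 \<or> s = 1 \<or> s = -1" by auto
    with q pq show False by auto
  qed
  moreover have "p + 2 * s \<noteq> 0"
  proof
    assume "p + 2 * s = 0"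
    then have "s dvd p" and "s dvd q"
      using q by (simp_all add: eq_neg_iff_add_eq_0[symmetric])
    then have "s dvd 1"
      using assms(2) by (metis gcd_greatest)
    with \<open>2 \<le> \<bar>s\<bar>\<close> show False by simp
  qed
  ultimately show ?thesis
    using that root z2 by blast
qed

lemma regular_psi_preimage_cyc:
  assumes pq: "1 + \<bar>p\<bar> < \<bar>q\<bar>" and "gcd p q = 1" and norm: "class_norm p q (z1, z2) = 0"
  shows "regular_lang (Sigma q) (psi_preimage p q (cyc (z1, z2)))"
proof (cases "z1 = 0")
  case True
  with norm have "z2 = 0" by (simp add: class_norm_def)
  with True show ?thesis
    by (simp add: psi_preimage_cyc_zero regular_lang_Nil)
next
  case False
  with assms obtain s where root: "s\<^sup>2 + p * s - q = 0" and z2: "z2 = - s * z1"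
    and "2 \<le> \<bar>s\<bar>" and "p + 2 * s \<noteq> 0"
    by (rule root_if_class_norm_eq_0)
  have "psi_preimage p q (cyc (z1, z2)) = Dom p q \<inter>
      {w \<in> lists (Sigma q). poly (Poly w) s = 0} \<inter>
      {w \<in> lists (Sigma q). \<bar>z1 * (p + 2 * s)\<bar> dvd poly (Poly w) (- p - s)}"
    using Dom_subset_lists[of p q]
    by (auto simp: mem_psi_preimage_eigenline_iff[OF root \<open>p + 2 * s \<noteq> 0\<close> z2])
  moreover have "0 < \<bar>z1 * (p + 2 * s)\<bar>"
    using False \<open>p + 2 * s \<noteq> 0\<close> by simp
  ultimately show ?thesis
    using regular_lang_Dom[OF pq] regular_lang_poly_root[OF \<open>2 \<le> \<bar>s\<bar>\<close> finite_Sigma]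
    by (simp only:) (intro regular_lang_Int regular_lang_poly_dvd)
qed

theorem mainTheorem6:
  fixes p q :: int
  assumes "1 + \<bar>p\<bar> < \<bar>q\<bar>" and "gcd p q = 1"
  shows "(\<forall>m::int. m \<noteq> 0 \<longrightarrow>
            \<not> regular_lang (Sigma q) (psi_preimage p q (cyc (zscale m xi))) \<and>
            \<not> regular_lang (Sigma q) (psi_preimage p q (cyc (zscale m eta))))
       \<and> (\<forall>(\<zeta>::int \<times> int) (m::int). m > 1 \<longrightarrow>
            \<not> regular_lang (Sigma q) (psi_preimage p q (cyc \<zeta>)) \<longrightarrow>
            \<not> regular_lang (Sigma q) (psi_preimage p q (cyc (zscale m \<zeta>))))"
proof -
  have nonregular_iff: "\<not> regular_lang (Sigma q) (psi_preimage p q (cyc z)) \<longleftrightarrow> class_norm p q z \<noteq> 0"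
    for z
    using not_regular_psi_preimage_cyc[OF assms] regular_psi_preimage_cyc[OF assms]
    by (cases z) blast
  have "class_norm p q xi = 1" and "class_norm p q eta = - q"
    by (simp_all add: class_norm_def xi_def eta_def)
  moreover have "q \<noteq> 0"
    using assms(1) by auto
  ultimately show ?thesis
    unfolding nonregular_iff class_norm_zscale by simp
qed

end
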